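(* Let $w$ be a positive integer constant. There exists a constant $h>0$ such that if $p>0$ is a function of $n$ and $f$ is a $w$-DNF on $\{0,1\}^{L_{d'}}$, then $f\circ\Phi_{d'}$ can be represented as a decision tree of height at most $h\ln(p)$ with probability $1-O(1/p)$.
   Context: Fix $k\ge2$ and $0\le\theta<1$; $n=k^d$ with $d'\le d$. $L_r$ is the set of depth-$r$ vertices of the complete $k$-ary tree, $\mathrm{parent}(v)$ the parent of $v$. $R_\theta$ is the distribution on $\{0,1,*\}$ giving $0$ and $1$ each probability $(1-\theta)/2$ and $*$ probability $\theta$. $\Phi_{d'}:\{0,1\}^{L_{d'-1}}\to\{0,1\}^{L_{d'}}$ is the random map defined by drawing $r\in\{0,1,*\}^{L_{d'}}$ with i.i.d. $R_\theta$ coordinates and setting $(\Phi_{d'}(x))_v=r_v$ if $r_v\in\{0,1\}$, and $x_{\mathrm{parent}(v)}$ if $r_v=*$. A $w$-DNF is an OR of ANDs of at most $w$ literals. *)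

theory Defs
  imports "HOL-Probability.Probability"
begin

text \<open>Vertices of the complete k-ary tree: lists over {0..<k}; depth = length;
  the parent of a vertex is obtained by dropping its last entry.\<close>
definition tree_level :: "nat \<Rightarrow> nat \<Rightarrow> nat list set" where
  "tree_level k r = {v. length v = r \<and> set v \<subseteq> {..<k}}"

definition parent :: "nat list \<Rightarrow> nat list" where
  "parent v = butlast v"

text \<open>The distribution R_theta on {0,1,*}: Some False = 0, Some True = 1, None = *.\<close>
definition R_theta :: "real \<Rightarrow> bool option pmf" where
  "R_theta \<theta> = embed_pmf (\<lambda>x. case x of None \<Rightarrow> \<theta> | Some _ \<Rightarrow> (1 - \<theta>) / 2)"

definition restr_pmf :: "nat \<Rightarrow> real \<Rightarrow> nat \<Rightarrow> (nat list \<Rightarrow> bool option) pmf" where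
  "restr_pmf k \<theta> d' = Pi_pmf (tree_level k d') None (\<lambda>_. R_theta \<theta>)"

definition Phi :: "(nat list \<Rightarrow> bool option) \<Rightarrow> (nat list \<Rightarrow> bool) \<Rightarrow> (nat list \<Rightarrow> bool)" where
  "Phi r x v = (case r v of Some b \<Rightarrow> b | None \<Rightarrow> x (parent v))"

text \<open>w-DNF over the variable set V: OR of terms, each an AND of at most w literals
  (a literal (v,b) means "y v = b").\<close>
definition is_wDNF :: "nat \<Rightarrow> 'v set \<Rightarrow> (('v \<Rightarrow> bool) \<Rightarrow> bool) \<Rightarrow> bool" where
  "is_wDNF w V f \<longleftrightarrow> (\<exists>T :: ('v \<times> bool) set set. finite T \<and>
     (\<forall>C\<in>T. finite C \<and> card C \<le> w \<and> fst ` C \<subseteq> V) \<and>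
     (\<forall>y. f y = (\<exists>C\<in>T. \<forall>(v, b)\<in>C. y v = b)))"

datatype 'v dtree = Leaf bool | Node 'v "'v dtree" "'v dtree"

fun dt_eval :: "'v dtree \<Rightarrow> ('v \<Rightarrow> bool) \<Rightarrow> bool" where
  "dt_eval (Leaf b) x = b"
| "dt_eval (Node v t0 t1) x = (if x v then dt_eval t1 x else dt_eval t0 x)"

fun dt_height :: "'v dtree \<Rightarrow> nat" where
  "dt_height (Leaf b) = 0"
| "dt_height (Node v t0 t1) = Suc (max (dt_height t0) (dt_height t1))"

definition has_dt_of_height :: "(('v \<Rightarrow> bool) \<Rightarrow> bool) \<Rightarrow> real \<Rightarrow> bool" where
  "has_dt_of_height g H \<longleftrightarrow> (\<exists>t. real (dt_height t) \<le> H \<and> (\<forall>x. dt_eval t x = g x))"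

end

theory Submission
  imports Defs
begin

(* Induction on the width, in the style of Hastad's switching lemma.  Let D(s) be the probability
   that f o Phi has no decision tree of height s.  For a (w+1)-DNF, take a maximal family M of
   consistent terms whose parent sets are pairwise disjoint, and let S be the set of these parents.
   The terms of M live on disjoint variables, so with probability at most
   (1 - ((1 - theta)/2)^(w+1))^|M| the restriction fixes none of them to true; if it fixes one,
   f o Phi is constant.  Otherwise query the at most (w+1)|M| variables of S: by maximality every
   term has a variable whose parent lies in S, so each of the 2^|S| answers leaves a w-DNF on the
   remaining variables, to which the induction hypothesis applies.  Balancing the two bounds gives
   D(s) <= A l^s with l < 1, and the height h ln p with h = -1 / ln l yields the bound O(1/p). *)

lemma has_dt_of_height_const: "H \<ge> 0 \<Longrightarrow> has_dt_of_height (\<lambda>_. c) H"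
  unfolding has_dt_of_height_def by (intro exI[of _ "Leaf c"]) auto

lemma has_dt_of_height_mono: "has_dt_of_height g H \<Longrightarrow> H \<le> H' \<Longrightarrow> has_dt_of_height g H'"
  unfolding has_dt_of_height_def by force

lemma has_dt_of_height_query:
  assumes "\<And>b. has_dt_of_height (\<lambda>x. g (x(u := b))) H"
  shows "has_dt_of_height g (H + 1)"
proof -
  obtain t0 where t0: "real (dt_height t0) \<le> H" "\<And>x. dt_eval t0 x = g (x(u := False))"
    using assms unfolding has_dt_of_height_def by blast
  obtain t1 where t1: "real (dt_height t1) \<le> H" "\<And>x. dt_eval t1 x = g (x(u := True))"
    using assms unfolding has_dt_of_height_def by blast
  have "dt_eval (Node u t0 t1) x = g x" for x
    using t0(2)[of x] t1(2)[of x] by (cases "x u") (simp_all add: fun_upd_idem)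
  moreover have "real (dt_height (Node u t0 t1)) \<le> H + 1"
    using t0(1) t1(1) by simp
  ultimately show ?thesis
    unfolding has_dt_of_height_def by blast
qed

lemma has_dt_of_height_query_set:
  assumes "finite S" "\<And>\<alpha>. \<alpha> \<in> S \<rightarrow>\<^sub>E UNIV \<Longrightarrow> has_dt_of_height (\<lambda>x. g (override_on x \<alpha> S)) H"
  shows "has_dt_of_height g (H + card S)"
  using assms
proof (induction S arbitrary: g rule: finite_induct)
  case empty
  then show ?case by simp
next
  case (insert u S)
  have "has_dt_of_height (\<lambda>x. g (x(u := b))) (H + card S)" for b
  proof (rule insert.IH)
    fix \<alpha> :: "_ \<Rightarrow> bool" assume "\<alpha> \<in> S \<rightarrow>\<^sub>E UNIV"
    then have "\<alpha>(u := b) \<in> insert u S \<rightarrow>\<^sub>E UNIV"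
      using insert.hyps(2) by (auto simp: PiE_def extensional_def)
    moreover have "(\<lambda>x. g (override_on x (\<alpha>(u := b)) (insert u S))) = (\<lambda>x. g ((override_on x \<alpha> S)(u := b)))"
      using insert.hyps(2) by (auto simp: override_on_def fun_eq_iff intro!: arg_cong[where f = g])
    ultimately show "has_dt_of_height (\<lambda>x. g ((override_on x \<alpha> S)(u := b))) H"
      using insert.prems by metis
  qed
  then have "has_dt_of_height g (H + card S + 1)"
    by (rule has_dt_of_height_query)
  then show ?case
    using insert.hyps by (simp add: algebra_simps)
qed

definition dnf :: "('v \<times> bool) set set \<Rightarrow> ('v \<Rightarrow> bool) \<Rightarrow> bool" where
  "dnf T y \<longleftrightarrow> (\<exists>C\<in>T. \<forall>l\<in>C. y (fst l) = snd l)"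

definition wdnf :: "nat \<Rightarrow> 'v set \<Rightarrow> ('v \<times> bool) set set \<Rightarrow> bool" where
  "wdnf w V T \<longleftrightarrow> finite T \<and> (\<forall>C\<in>T. finite C \<and> card C \<le> w \<and> fst ` C \<subseteq> V)"

lemma is_wDNF_iff: "is_wDNF w V f \<longleftrightarrow> (\<exists>T. wdnf w V T \<and> f = dnf T)"
  unfolding is_wDNF_def wdnf_def dnf_def fun_eq_iff by (simp add: case_prod_beta)

lemma dnf_cong:
  assumes "\<And>v. v \<in> (\<Union>C\<in>T. fst ` C) \<Longrightarrow> y v = z v"
  shows "dnf T y = dnf T z"
  unfolding dnf_def using assms by auto

definition consistent_term :: "('v \<times> bool) set \<Rightarrow> bool" where
  "consistent_term C \<longleftrightarrow> (\<forall>v. (v, True) \<notin> C \<or> (v, False) \<notin> C)"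

lemma consistent_term_if_satisfied:
  assumes sat: "\<forall>l\<in>C. y (fst l) = snd l"
  shows "consistent_term C"
  unfolding consistent_term_def
proof
  fix v
  have "y v" if "(v, True) \<in> C" using sat that by fastforce
  moreover have "\<not> y v" if "(v, False) \<in> C" using sat that by fastforce
  ultimately show "(v, True) \<notin> C \<or> (v, False) \<notin> C" by blast
qed

lemma dnf_consistent_terms: "dnf {C\<in>T. consistent_term C} y = dnf T y"
  unfolding dnf_def by (blast intro: consistent_term_if_satisfied)

definition dnf_restrict :: "('v \<times> bool) set set \<Rightarrow> 'v set \<Rightarrow> ('v \<Rightarrow> bool) \<Rightarrow> ('v \<times> bool) set set" where
  "dnf_restrict T A y = (\<lambda>C. {l\<in>C. fst l \<notin> A}) ` {C\<in>T. \<forall>l\<in>C. fst l \<in> A \<longrightarrow> y (fst l) = snd l}"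

lemma dnf_override_on: "dnf T (override_on z y A) = dnf (dnf_restrict T A y) z"
proof -
  have term_iff: "(\<forall>l\<in>C. override_on z y A (fst l) = snd l) \<longleftrightarrow>
      (\<forall>l\<in>C. fst l \<in> A \<longrightarrow> y (fst l) = snd l) \<and> (\<forall>l\<in>{l\<in>C. fst l \<notin> A}. z (fst l) = snd l)" for C
    by (auto simp: override_on_def)
  show ?thesis
    unfolding dnf_def dnf_restrict_def by (simp add: term_iff Bex_def)
qed

lemma wdnf_dnf_restrict:
  assumes "wdnf (Suc w) V T" and "\<And>C. C \<in> T \<Longrightarrow> C \<noteq> {} \<Longrightarrow> fst ` C \<inter> A \<noteq> {}"
  shows "wdnf w (V - A) (dnf_restrict T A y)"
  unfolding wdnf_def
proof (intro conjI ballI)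
  show "finite (dnf_restrict T A y)"
    using assms(1) unfolding wdnf_def dnf_restrict_def by simp
next
  fix C' assume "C' \<in> dnf_restrict T A y"
  then obtain C where C: "C \<in> T" and C': "C' = {l\<in>C. fst l \<notin> A}"
    unfolding dnf_restrict_def by blast
  have fin: "finite C" "card C \<le> Suc w" "fst ` C \<subseteq> V"
    using assms(1) C unfolding wdnf_def by auto
  show "finite C'" "fst ` C' \<subseteq> V - A"
    using fin C' by auto
  show "card C' \<le> w"
  proof (cases "C = {}")
    case False
    then have "C' \<subset> C"
      using assms(2)[OF C] C' by auto
    then have "card C' < card C"
      using fin(1) by (rule psubset_card_mono[rotated])
    then show ?thesis
      using fin(2) by linarith
  qed (use C' in simp)
qed

lemma pmf_R_theta:
  assumes "0 \<le> \<theta>" "\<theta> \<le> 1"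
  shows "pmf (R_theta \<theta>) x = (case x of None \<Rightarrow> \<theta> | Some _ \<Rightarrow> (1 - \<theta>) / 2)"
  unfolding R_theta_def
proof (rule pmf_embed_pmf)
  let ?g = "\<lambda>x :: bool option. case x of None \<Rightarrow> \<theta> | Some _ \<Rightarrow> (1 - \<theta>) / 2"
  have UNIV_eq: "(UNIV :: bool option set) = {None, Some True, Some False}"
    by (auto intro: option.exhaust)
  show "0 \<le> ?g x" for x
    using assms by (simp split: option.split)
  have "(\<integral>\<^sup>+x. ennreal (?g x) \<partial>count_space UNIV) = (\<Sum>x\<in>{None, Some True, Some False}. ennreal (?g x))"
    by (subst nn_integral_count_space_finite) (simp_all add: UNIV_eq)
  also have "\<dots> = ennreal (\<theta> + (1 - \<theta>) / 2 + (1 - \<theta>) / 2)"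
    using assms by (simp add: ennreal_plus[symmetric] del: ennreal_plus)
  finally show "(\<integral>\<^sup>+x. ennreal (?g x) \<partial>count_space UNIV) = 1"
    by simp
qed

lemma prob_pair_pmf_Sigma_le:
  assumes "\<And>a. a \<in> E \<Longrightarrow> measure_pmf.prob q (G a) \<le> K" and "0 \<le> K"
  shows "measure_pmf.prob (pair_pmf p q) (Sigma E G) \<le> measure_pmf.prob p E * K"
proof -
  have "emeasure (pair_pmf p q) (Sigma E G) = (\<integral>\<^sup>+a. \<integral>\<^sup>+b. indicator (Sigma E G) (a, b) \<partial>q \<partial>p)"
    by (simp add: nn_integral_pair_pmf'[symmetric])
  also have "\<dots> = (\<integral>\<^sup>+a. indicator E a * emeasure q (G a) \<partial>p)"
  proof (intro nn_integral_cong)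
    fix a
    have "indicator (Sigma E G) (a, b) = indicator E a * (indicator (G a) b :: ennreal)" for b
      by (simp add: indicator_def)
    then show "(\<integral>\<^sup>+b. indicator (Sigma E G) (a, b) \<partial>q) = indicator E a * emeasure q (G a)"
      by (simp add: nn_integral_cmult)
  qed
  also have "\<dots> \<le> (\<integral>\<^sup>+a. indicator E a * ennreal K \<partial>p)"
    using assms by (intro nn_integral_mono)
      (auto simp: indicator_def measure_pmf.emeasure_eq_measure intro: ennreal_leI)
  also have "\<dots> = ennreal (measure_pmf.prob p E * K)"
    using assms(2) by (simp add: nn_integral_multc measure_pmf.emeasure_eq_measure ennreal_mult)
  moreover have "0 \<le> measure_pmf.prob p E * K"
    using assms(2) by simp
  ultimately show ?thesis
    by (simp add: measure_pmf.emeasure_eq_measure)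
qed

lemma prob_Pi_pmf_union_le:
  assumes "finite A" "finite B" "A \<inter> B = {}" "0 \<le> K"
    and "\<And>f g. override_on g f A \<in> X \<Longrightarrow> f \<in> E \<and> g \<in> G f"
    and "\<And>f. f \<in> E \<Longrightarrow> measure_pmf.prob (Pi_pmf B d p) (G f) \<le> K"
  shows "measure_pmf.prob (Pi_pmf (A \<union> B) d p) X \<le> measure_pmf.prob (Pi_pmf A d p) E * K"
proof -
  let ?h = "\<lambda>(f, g). override_on g f A"
  have "measure_pmf.prob (Pi_pmf (A \<union> B) d p) X
      = measure_pmf.prob (pair_pmf (Pi_pmf A d p) (Pi_pmf B d p)) (?h -` X)"
    by (simp add: Pi_pmf_union[OF assms(1-3)] override_on_def[abs_def])
  also have "\<dots> \<le> measure_pmf.prob (pair_pmf (Pi_pmf A d p) (Pi_pmf B d p)) (Sigma E G)"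
    using assms(5) by (intro measure_pmf.finite_measure_mono) auto
  also have "\<dots> \<le> measure_pmf.prob (Pi_pmf A d p) E * K"
    using assms(6,4) by (rule prob_pair_pmf_Sigma_le)
  finally show ?thesis .
qed

definition forces_term :: "('v \<Rightarrow> bool option) \<Rightarrow> ('v \<times> bool) set \<Rightarrow> bool" where
  "forces_term r C \<longleftrightarrow> (\<forall>l\<in>C. r (fst l) = Some (snd l))"

lemma forces_term_override_on_inside:
  assumes "fst ` C \<subseteq> X"
  shows "forces_term (override_on g f X) C = forces_term f C"
proof -
  have "override_on g f X (fst l) = f (fst l)" if "l \<in> C" for l
    using assms that by (simp add: image_subset_iff)
  then show ?thesis
    unfolding forces_term_def by simp
qed

lemma forces_term_override_on_outside:
  "fst ` C \<inter> X = {} \<Longrightarrow> forces_term (override_on g f X) C = forces_term g C"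
  unfolding forces_term_def by (auto simp: disjoint_iff)

lemma forces_term_if_Pi:
  assumes "consistent_term C" "fst ` C \<subseteq> A"
    and "r \<in> Pi A (\<lambda>v. if v \<in> fst ` C then {Some ((v, True) \<in> C)} else UNIV)"
  shows "forces_term r C"
  unfolding forces_term_def
proof
  fix l assume l: "l \<in> C"
  then have v: "fst l \<in> fst ` C"
    by (rule imageI)
  then have "r (fst l) = Some ((fst l, True) \<in> C)"
    using Pi_mem[OF assms(3), of "fst l"] assms(2) by auto
  moreover have "((fst l, True) \<in> C) = snd l"
    using l assms(1) unfolding consistent_term_def by (cases l; cases "snd l") auto
  ultimately show "r (fst l) = Some (snd l)"
    by simp
qed

lemma prob_forces_term_ge:
  assumes "finite A" "finite C" "consistent_term C" "card C \<le> W" "fst ` C \<subseteq> A"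
    and "0 \<le> \<theta>" "\<theta> \<le> 1"
  shows "((1 - \<theta>) / 2) ^ W \<le> measure_pmf.prob (Pi_pmf A None (\<lambda>_. R_theta \<theta>)) {r. forces_term r C}"
proof -
  let ?P = "Pi_pmf A None (\<lambda>_. R_theta \<theta>)"
  let ?B = "\<lambda>v. if v \<in> fst ` C then {Some ((v, True) \<in> C)} else UNIV"
  have "((1 - \<theta>) / 2) ^ W \<le> ((1 - \<theta>) / 2) ^ card (fst ` C)"
    using assms(6,7) card_image_le[OF assms(2), of fst] assms(4) by (intro power_decreasing) auto
  also have "\<dots> = (\<Prod>v\<in>A. if v \<in> fst ` C then (1 - \<theta>) / 2 else 1)"
    using assms(1,5) by (simp add: prod.If_cases Int_absorb1)
  also have "\<dots> = (\<Prod>v\<in>A. measure_pmf.prob (R_theta \<theta>) (?B v))"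
    using assms(6,7) by (intro prod.cong refl) (simp add: measure_pmf_single pmf_R_theta)
  also have "\<dots> = measure_pmf.prob ?P (Pi A ?B)"
    using assms(1) by (rule measure_Pi_pmf_Pi[symmetric])
  also have "\<dots> \<le> measure_pmf.prob ?P {r. forces_term r C}"
    using forces_term_if_Pi[OF assms(3,5)] by (intro measure_pmf.finite_measure_mono) auto
  finally show ?thesis .
qed

lemma prob_not_forces_term_le:
  assumes "finite A" "finite C" "consistent_term C" "card C \<le> W" "fst ` C \<subseteq> A"
    and "0 \<le> \<theta>" "\<theta> \<le> 1"
  shows "measure_pmf.prob (Pi_pmf A None (\<lambda>_. R_theta \<theta>)) {r. \<not> forces_term r C} \<le> 1 - ((1 - \<theta>) / 2) ^ W"
proof -
  let ?P = "Pi_pmf A None (\<lambda>_. R_theta \<theta>)"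
  have "measure_pmf.prob ?P {r. \<not> forces_term r C} = 1 - measure_pmf.prob ?P {r. forces_term r C}"
    using measure_pmf.prob_compl[of "{r. forces_term r C}" ?P]
    by (simp add: Compl_eq_Diff_UNIV[symmetric] Collect_neg_eq)
  then show ?thesis
    using prob_forces_term_ge[OF assms] by linarith
qed

lemma prob_forces_no_term_le:
  assumes "finite M" "finite A" "disjoint_family_on (\<lambda>C. fst ` C) M"
    and "\<And>C. C \<in> M \<Longrightarrow> finite C \<and> consistent_term C \<and> card C \<le> W \<and> fst ` C \<subseteq> A"
    and "0 \<le> \<theta>" "\<theta> \<le> 1"
  shows "measure_pmf.prob (Pi_pmf A None (\<lambda>_. R_theta \<theta>)) {r. \<forall>C\<in>M. \<not> forces_term r C}
           \<le> (1 - ((1 - \<theta>) / 2) ^ W) ^ card M"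
  using assms(1-4)
proof (induction M arbitrary: A rule: finite_induct)
  case empty
  then show ?case by simp
next
  case (insert C M)
  let ?\<beta> = "1 - ((1 - \<theta>) / 2) ^ W" and ?R = "\<lambda>_. R_theta \<theta>"
  have C: "finite C" "consistent_term C" "card C \<le> W" "fst ` C \<subseteq> A"
    using insert.prems(3) by auto
  have M: "disjoint_family_on (\<lambda>C. fst ` C) M" "\<And>D. D \<in> M \<Longrightarrow> fst ` D \<inter> fst ` C = {}"
    using insert.prems(2) insert.hyps(2) by (auto simp: disjoint_family_on_insert)
  have "0 \<le> ?\<beta>"
    using assms(5,6) by (simp add: power_le_one)
  have "measure_pmf.prob (Pi_pmf (fst ` C \<union> (A - fst ` C)) None ?R) {r. \<forall>D\<in>insert C M. \<not> forces_term r D}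
      \<le> measure_pmf.prob (Pi_pmf (fst ` C) None ?R) {f. \<not> forces_term f C} * ?\<beta> ^ card M"
  proof (rule prob_Pi_pmf_union_le)
    fix f g
    assume bad: "override_on g f (fst ` C) \<in> {r. \<forall>D\<in>insert C M. \<not> forces_term r D}"
    have "\<not> forces_term f C"
      using bad forces_term_override_on_inside[of C "fst ` C" g f] by simp
    moreover have "\<not> forces_term g D" if "D \<in> M" for D
      using bad that forces_term_override_on_outside[OF M(2)[OF that], of g f] by simp
    ultimately show "f \<in> {f. \<not> forces_term f C} \<and> g \<in> {g. \<forall>D\<in>M. \<not> forces_term g D}"
      by blast
  next
    show "measure_pmf.prob (Pi_pmf (A - fst ` C) None ?R) {g. \<forall>D\<in>M. \<not> forces_term g D} \<le> ?\<beta> ^ card M"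
    proof (rule insert.IH)
      fix D assume "D \<in> M"
      then have "finite D \<and> consistent_term D \<and> card D \<le> W \<and> fst ` D \<subseteq> A" "fst ` D \<inter> fst ` C = {}"
        using insert.prems(3) M(2) by simp_all
      then show "finite D \<and> consistent_term D \<and> card D \<le> W \<and> fst ` D \<subseteq> A - fst ` C"
        by blast
    qed (use insert.prems(1) M(1) in simp_all)
  qed (use C(1) insert.prems(1) \<open>0 \<le> ?\<beta>\<close> in simp_all)
  also have "\<dots> \<le> ?\<beta> * ?\<beta> ^ card M"
    using C assms(5,6) \<open>0 \<le> ?\<beta>\<close> by (intro mult_right_mono prob_not_forces_term_le) simp_all
  also have "fst ` C \<union> (A - fst ` C) = A"
    using C(4) by blast
  finally show ?case
    using insert.hyps by simp
qed

lemma ex_disjoint_subfamily_meeting_all: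
  assumes "finite F"
  shows "\<exists>M\<subseteq>F. disjoint_family_on g M \<and> (\<forall>X\<in>F. g X \<noteq> {} \<longrightarrow> (\<exists>Y\<in>M. g X \<inter> g Y \<noteq> {}))"
  using assms
proof (induction F rule: finite_induct)
  case empty
  show ?case by (auto simp: disjoint_family_on_def)
next
  case (insert X F)
  then obtain M where M: "M \<subseteq> F" "disjoint_family_on g M" "\<forall>X\<in>F. g X \<noteq> {} \<longrightarrow> (\<exists>Y\<in>M. g X \<inter> g Y \<noteq> {})"
    by blast
  show ?case
  proof (cases "g X = {} \<or> (\<exists>Y\<in>M. g X \<inter> g Y \<noteq> {})")
    case True
    then show ?thesis
      using M by (intro exI[of _ M]) auto
  next
    case False
    then have "X \<notin> M" "g X \<inter> (\<Union>Y\<in>M. g Y) = {}"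
      by auto
    then have "disjoint_family_on g (insert X M)"
      using M(2) by (simp add: disjoint_family_on_insert)
    then show ?thesis
      using M False by (intro exI[of _ "insert X M"]) auto
  qed
qed

definition Phi_par :: "('v \<Rightarrow> 'u) \<Rightarrow> ('v \<Rightarrow> bool option) \<Rightarrow> ('u \<Rightarrow> bool) \<Rightarrow> 'v \<Rightarrow> bool" where
  "Phi_par par r x v = (case r v of Some b \<Rightarrow> b | None \<Rightarrow> x (par v))"

lemma Phi_eq_Phi_par: "Phi = Phi_par parent"
  by (simp add: fun_eq_iff Phi_def Phi_par_def)

lemma finite_tree_level: "finite (tree_level k d)"
proof -
  have "tree_level k d = {xs. set xs \<subseteq> {..<k} \<and> length xs = d}"
    unfolding tree_level_def by auto
  then show ?thesis
    by (simp add: finite_lists_length_eq)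
qed

definition dt_failure_prob :: "('v \<Rightarrow> 'u) \<Rightarrow> real \<Rightarrow> 'v set \<Rightarrow> ('v \<times> bool) set set \<Rightarrow> nat \<Rightarrow> real" where
  "dt_failure_prob par \<theta> V T s = measure_pmf.prob (Pi_pmf V None (\<lambda>_. R_theta \<theta>))
     {r. \<not> has_dt_of_height (\<lambda>x. dnf T (Phi_par par r x)) (real s)}"

lemma has_dt_of_height_if_forces_term:
  assumes "C \<in> T" "forces_term r C" "0 \<le> H"
  shows "has_dt_of_height (\<lambda>x. dnf T (Phi_par par r x)) H"
proof -
  have "dnf T (Phi_par par r x)" for x
    unfolding dnf_def
  proof (intro bexI[OF _ assms(1)] ballI)
    fix l assume "l \<in> C"
    then have "r (fst l) = Some (snd l)"
      using assms(2) unfolding forces_term_def by blast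
    then show "Phi_par par r x (fst l) = snd l"
      by (simp add: Phi_par_def)
  qed
  then show ?thesis
    using has_dt_of_height_const[OF assms(3), of True] by simp
qed

lemma dt_failure_prob_le_forces_none:
  assumes "M \<subseteq> T"
  shows "dt_failure_prob par \<theta> V T s
    \<le> measure_pmf.prob (Pi_pmf V None (\<lambda>_. R_theta \<theta>)) {r. \<forall>D\<in>M. \<not> forces_term r D}"
  unfolding dt_failure_prob_def
proof (rule measure_pmf.finite_measure_mono)
  show "{r. \<not> has_dt_of_height (\<lambda>x. dnf T (Phi_par par r x)) (real s)} \<subseteq> {r. \<forall>D\<in>M. \<not> forces_term r D}"
    using assms has_dt_of_height_if_forces_term[of _ T, OF _ _ of_nat_0_le_iff] by blast
qed simp

lemma has_dt_of_height_query_parents: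
  assumes "finite S" "A = {v\<in>V. par v \<in> S}" "\<And>C. C \<in> T \<Longrightarrow> fst ` C \<subseteq> V"
    and "\<And>\<alpha>. \<alpha> \<in> S \<rightarrow>\<^sub>E UNIV \<Longrightarrow>
      has_dt_of_height (\<lambda>x. dnf (dnf_restrict T A (Phi_par par f \<alpha>)) (Phi_par par g x)) H"
  shows "has_dt_of_height (\<lambda>x. dnf T (Phi_par par (override_on g f A) x)) (H + card S)"
proof (rule has_dt_of_height_query_set[OF assms(1)])
  fix \<alpha> :: "_ \<Rightarrow> bool"
  have "dnf T (Phi_par par (override_on g f A) (override_on x \<alpha> S))
      = dnf T (override_on (Phi_par par g x) (Phi_par par f \<alpha>) A)" for x
    using assms(2,3) by (intro dnf_cong) (fastforce simp: Phi_par_def override_on_def split: option.split)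
  moreover assume "\<alpha> \<in> S \<rightarrow>\<^sub>E UNIV"
  ultimately show "has_dt_of_height (\<lambda>x. dnf T (Phi_par par (override_on g f A) (override_on x \<alpha> S))) H"
    using assms(4) by (simp add: dnf_override_on)
qed

lemma prob_restrictions_no_dt_le:
  assumes "finite S" "wdnf (Suc w) V T" "\<And>C. C \<in> T \<Longrightarrow> C \<noteq> {} \<Longrightarrow> fst ` C \<inter> A \<noteq> {}"
    and IH: "\<And>T'. wdnf w (V - A) T' \<Longrightarrow> dt_failure_prob par \<theta> (V - A) T' t \<le> K"
  shows "measure_pmf.prob (Pi_pmf (V - A) None (\<lambda>_. R_theta \<theta>))
      (\<Union>\<alpha>\<in>S \<rightarrow>\<^sub>E UNIV. {g. \<not> has_dt_of_height (\<lambda>x. dnf (dnf_restrict T A (Phi_par par f \<alpha>)) (Phi_par par g x)) (real t)})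
    \<le> 2 ^ card S * K"
proof -
  have "measure_pmf.prob (Pi_pmf (V - A) None (\<lambda>_. R_theta \<theta>))
      (\<Union>\<alpha>\<in>S \<rightarrow>\<^sub>E UNIV. {g. \<not> has_dt_of_height (\<lambda>x. dnf (dnf_restrict T A (Phi_par par f \<alpha>)) (Phi_par par g x)) (real t)})
      \<le> (\<Sum>\<alpha>\<in>S \<rightarrow>\<^sub>E UNIV. dt_failure_prob par \<theta> (V - A) (dnf_restrict T A (Phi_par par f \<alpha>)) t)"
    unfolding dt_failure_prob_def using assms(1)
    by (intro measure_pmf.finite_measure_subadditive_finite) (auto intro: finite_PiE)
  also have "\<dots> \<le> (\<Sum>\<alpha>\<in>S \<rightarrow>\<^sub>E (UNIV :: bool set). K)"
    using assms(2,3) by (intro sum_mono IH wdnf_dnf_restrict) auto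
  also have "\<dots> = 2 ^ card S * K"
    using assms(1) by (simp add: card_PiE)
  finally show ?thesis .
qed

lemma dt_failure_prob_query_le:
  assumes "finite V" "finite S" "A = {v\<in>V. par v \<in> S}" "wdnf (Suc w) V T"
    and "\<And>C. C \<in> T \<Longrightarrow> C \<noteq> {} \<Longrightarrow> fst ` C \<inter> A \<noteq> {}"
    and "M \<subseteq> T" "\<And>D. D \<in> M \<Longrightarrow> fst ` D \<subseteq> A"
    and IH: "\<And>T'. wdnf w (V - A) T' \<Longrightarrow> dt_failure_prob par \<theta> (V - A) T' t \<le> K" and "0 \<le> K"
  shows "dt_failure_prob par \<theta> V T (card S + t)
    \<le> measure_pmf.prob (Pi_pmf A None (\<lambda>_. R_theta \<theta>)) {f. \<forall>D\<in>M. \<not> forces_term f D} * (2 ^ card S * K)"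
proof -
  let ?G = "\<lambda>f. \<Union>\<alpha>\<in>S \<rightarrow>\<^sub>E UNIV.
    {g. \<not> has_dt_of_height (\<lambda>x. dnf (dnf_restrict T A (Phi_par par f \<alpha>)) (Phi_par par g x)) (real t)}"
  have V: "V = A \<union> (V - A)" and vars: "\<And>C. C \<in> T \<Longrightarrow> fst ` C \<subseteq> V"
    using assms(3,4) unfolding wdnf_def by auto
  have "dt_failure_prob par \<theta> (A \<union> (V - A)) T (card S + t)
    \<le> measure_pmf.prob (Pi_pmf A None (\<lambda>_. R_theta \<theta>)) {f. \<forall>D\<in>M. \<not> forces_term f D} * (2 ^ card S * K)"
    unfolding dt_failure_prob_def
  proof (rule prob_Pi_pmf_union_le)
    fix f g
    assume bad: "override_on g f A \<in> {r. \<not> has_dt_of_height (\<lambda>x. dnf T (Phi_par par r x)) (real (card S + t))}"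
    have "\<not> forces_term f D" if "D \<in> M" for D
    proof
      assume "forces_term f D"
      then have "has_dt_of_height (\<lambda>x. dnf T (Phi_par par (override_on g f A) x)) (real (card S + t))"
        using assms(6) that forces_term_override_on_inside[OF assms(7)[OF that]]
        by (intro has_dt_of_height_if_forces_term[of D]) auto
      then show False
        using bad by simp
    qed
    moreover have "g \<in> ?G f"
    proof (rule ccontr)
      assume "g \<notin> ?G f"
      then have "has_dt_of_height (\<lambda>x. dnf T (Phi_par par (override_on g f A) x)) (real t + card S)"
        by (intro has_dt_of_height_query_parents[OF assms(2,3) vars]) auto
      then show False
        using bad by (simp add: add.commute)
    qed
    ultimately show "f \<in> {f. \<forall>D\<in>M. \<not> forces_term f D} \<and> g \<in> ?G f"
      by simp
  qed (use assms(1-5,9) prob_restrictions_no_dt_le[OF assms(2,4,5) IH] in auto)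
  then show ?thesis
    using V by simp
qed

lemma card_UN_image_le:
  assumes "finite I" "\<And>i. i \<in> I \<Longrightarrow> finite (B i) \<and> card (B i) \<le> W"
  shows "card (\<Union>i\<in>I. f ` B i) \<le> W * card I"
proof -
  have "card (\<Union>i\<in>I. f ` B i) \<le> (\<Sum>i\<in>I. card (f ` B i))"
    using assms(1) by (rule card_UN_le)
  also have "\<dots> \<le> (\<Sum>i\<in>I. W)"
    using assms(2) by (intro sum_mono) (metis card_image_le le_trans)
  finally show ?thesis
    by (simp add: mult.commute)
qed

lemma disjoint_family_on_image_imp:
  assumes "disjoint_family_on (\<lambda>i. f ` B i) I"
  shows "disjoint_family_on B I"
  unfolding disjoint_family_on_def
proof (intro ballI impI)
  fix i j assume "i \<in> I" "j \<in> I" "i \<noteq> j"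
  then have "f ` B i \<inter> f ` B j = {}"
    using assms by (simp add: disjoint_family_on_def)
  then show "B i \<inter> B j = {}"
    by (metis image_Int_subset image_is_empty subset_empty)
qed

lemma preimage_UN_image_meets:
  assumes "i \<in> I" "f ` X \<inter> f ` B i \<noteq> {}" "X \<subseteq> V"
  shows "X \<inter> {v\<in>V. f v \<in> (\<Union>i\<in>I. f ` B i)} \<noteq> {}"
proof -
  obtain u where u: "u \<in> f ` X" "u \<in> f ` B i"
    using assms(2) by (metis IntE ex_in_conv)
  from u(1) obtain v where "v \<in> X" "u = f v"
    by (rule imageE)
  then have "v \<in> X \<inter> {v\<in>V. f v \<in> (\<Union>i\<in>I. f ` B i)}"
    using assms(1,3) u(2) by auto
  then show ?thesis
    by (metis empty_iff)
qed

lemma ex_parent_disjoint_cover: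
  fixes par :: "'v \<Rightarrow> 'u"
  assumes "wdnf W V T"
  obtains M S where "M \<subseteq> T" "disjoint_family_on (\<lambda>C. fst ` C) M" "finite S" "card S \<le> W * card M"
    "\<And>D. D \<in> M \<Longrightarrow> fst ` D \<subseteq> {v\<in>V. par v \<in> S}"
    "\<And>C. C \<in> T \<Longrightarrow> C \<noteq> {} \<Longrightarrow> fst ` C \<inter> {v\<in>V. par v \<in> S} \<noteq> {}"
proof -
  have T: "finite T" "\<And>C. C \<in> T \<Longrightarrow> finite C \<and> card C \<le> W \<and> fst ` C \<subseteq> V"
    using assms unfolding wdnf_def by auto
  obtain M where M: "M \<subseteq> T" "disjoint_family_on (\<lambda>C. par ` fst ` C) M"
    and hit: "\<forall>C\<in>T. par ` fst ` C \<noteq> {} \<longrightarrow> (\<exists>D\<in>M. par ` fst ` C \<inter> par ` fst ` D \<noteq> {})"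
    using ex_disjoint_subfamily_meeting_all[OF T(1), of "\<lambda>C. par ` fst ` C"] by blast
  have "finite M"
    using M(1) T(1) by (rule finite_subset)
  have MD: "finite (fst ` D) \<and> card (fst ` D) \<le> W \<and> fst ` D \<subseteq> V" if "D \<in> M" for D
    using T(2)[OF subsetD[OF M(1) that]] card_image_le[of D fst] by simp
  show ?thesis
  proof (rule that[OF M(1) disjoint_family_on_image_imp[OF M(2)]])
    show "finite (\<Union>D\<in>M. par ` fst ` D)"
      using \<open>finite M\<close> MD by simp
    show "card (\<Union>D\<in>M. par ` fst ` D) \<le> W * card M"
      using \<open>finite M\<close> MD by (intro card_UN_image_le) simp_all
    show "fst ` D \<subseteq> {v\<in>V. par v \<in> (\<Union>D\<in>M. par ` fst ` D)}" if "D \<in> M" for D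
    proof
      fix v assume "v \<in> fst ` D"
      moreover have "par v \<in> (\<Union>D\<in>M. par ` fst ` D)" if "v \<in> fst ` D"
        using \<open>D \<in> M\<close> that by auto
      ultimately show "v \<in> {v\<in>V. par v \<in> (\<Union>D\<in>M. par ` fst ` D)}"
        using MD[OF that] by auto
    qed
    show "fst ` C \<inter> {v\<in>V. par v \<in> (\<Union>D\<in>M. par ` fst ` D)} \<noteq> {}" if "C \<in> T" "C \<noteq> {}" for C
    proof -
      have "\<exists>D\<in>M. par ` fst ` C \<inter> par ` fst ` D \<noteq> {}"
        using hit that by simp
      then obtain D where "D \<in> M" "par ` fst ` C \<inter> par ` fst ` D \<noteq> {}" ..
      then show ?thesis
        using T(2)[OF that(1)] by (intro preimage_UN_image_meets[where B = "\<lambda>D. fst ` D"]) simp_all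
    qed
  qed
qed

lemma dt_failure_prob_round:
  fixes par :: "'v \<Rightarrow> 'u"
  assumes "0 \<le> \<theta>" "\<theta> \<le> 1" "finite V" "wdnf (Suc w) V T"
    and IH: "\<And>V' T' t. finite V' \<Longrightarrow> wdnf w V' T' \<Longrightarrow> dt_failure_prob par \<theta> V' T' t \<le> Ac * lc ^ t"
    and "0 \<le> Ac" "0 \<le> lc"
  obtains c m where "c \<le> Suc w * m"
    "\<And>s. dt_failure_prob par \<theta> V T s \<le> (1 - ((1 - \<theta>) / 2) ^ Suc w) ^ m"
    "\<And>t. dt_failure_prob par \<theta> V T (c + t) \<le> (1 - ((1 - \<theta>) / 2) ^ Suc w) ^ m * (2 ^ c * (Ac * lc ^ t))"
proof -
  let ?\<beta> = "1 - ((1 - \<theta>) / 2) ^ Suc w"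
  define T0 where "T0 = {C\<in>T. consistent_term C}"
  have T_T0: "dt_failure_prob par \<theta> V T s = dt_failure_prob par \<theta> V T0 s" for s
    by (simp add: dt_failure_prob_def T0_def dnf_consistent_terms)
  have T0: "wdnf (Suc w) V T0"
    using assms(4) by (auto simp: wdnf_def T0_def)
  obtain M S where M: "M \<subseteq> T0" "disjoint_family_on (\<lambda>C. fst ` C) M" "finite S" "card S \<le> Suc w * card M"
    "\<And>D. D \<in> M \<Longrightarrow> fst ` D \<subseteq> {v\<in>V. par v \<in> S}"
    "\<And>C. C \<in> T0 \<Longrightarrow> C \<noteq> {} \<Longrightarrow> fst ` C \<inter> {v\<in>V. par v \<in> S} \<noteq> {}"
    using ex_parent_disjoint_cover[OF T0, of par] by blast
  have "finite M"
    using M(1) T0 finite_subset unfolding wdnf_def by auto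
  have MD: "finite D \<and> consistent_term D \<and> card D \<le> Suc w \<and> fst ` D \<subseteq> V" if "D \<in> M" for D
    using M(1) T0 that unfolding wdnf_def T0_def by auto
  have forces_none: "measure_pmf.prob (Pi_pmf X None (\<lambda>_. R_theta \<theta>)) {f. \<forall>D\<in>M. \<not> forces_term f D} \<le> ?\<beta> ^ card M"
    if "finite X" "\<And>D. D \<in> M \<Longrightarrow> fst ` D \<subseteq> X" for X
    using MD that(2) by (intro prob_forces_no_term_le[OF \<open>finite M\<close> that(1) M(2) _ assms(1,2)]) simp
  show ?thesis
  proof (rule that[OF M(4)])
    show "dt_failure_prob par \<theta> V T s \<le> ?\<beta> ^ card M" for s
    proof -
      have "fst ` D \<subseteq> V" if "D \<in> M" for D
        using MD[OF that] by simp
      then have "measure_pmf.prob (Pi_pmf V None (\<lambda>_. R_theta \<theta>)) {f. \<forall>D\<in>M. \<not> forces_term f D} \<le> ?\<beta> ^ card M"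
        by (rule forces_none[OF assms(3)])
      then show ?thesis
        unfolding T_T0 using dt_failure_prob_le_forces_none[OF M(1), of par \<theta> V s] by linarith
    qed
    show "dt_failure_prob par \<theta> V T (card S + t) \<le> ?\<beta> ^ card M * (2 ^ card S * (Ac * lc ^ t))" for t
    proof -
      have "dt_failure_prob par \<theta> V T0 (card S + t) \<le> measure_pmf.prob (Pi_pmf {v\<in>V. par v \<in> S} None (\<lambda>_. R_theta \<theta>))
          {f. \<forall>D\<in>M. \<not> forces_term f D} * (2 ^ card S * (Ac * lc ^ t))"
        using IH assms(3,6,7) by (intro dt_failure_prob_query_le[OF assms(3) M(3) refl T0 M(6,1,5)]) auto
      also have "\<dots> \<le> ?\<beta> ^ card M * (2 ^ card S * (Ac * lc ^ t))"
        using assms(3,6,7) M(5) by (intro mult_right_mono forces_none) simp_all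
      finally show ?thesis
        using T_T0 by simp
    qed
  qed
qed

lemma power_le_powr_root:
  fixes \<beta> :: real and N :: nat
  assumes "0 < \<beta>" "\<beta> \<le> 1" "0 < N" "s \<le> N * m"
  shows "\<beta> ^ m \<le> (\<beta> powr (1 / N)) ^ s"
proof -
  have "real s / N \<le> m"
    using assms(3,4) by (simp add: field_simps) (metis of_nat_le_iff of_nat_mult mult.commute)
  then have "\<beta> powr m \<le> \<beta> powr (real s / N)"
    using assms(1,2) by (intro powr_mono') simp_all
  then show ?thesis
    using assms(1) by (simp add: powr_realpow[symmetric] powr_powr)
qed

lemma two_power_mult_power_le:
  fixes lc :: real and K c s :: nat
  assumes "0 < lc" "lc \<le> 1" "0 < K" "K * c \<le> s"
  shows "2 ^ c * lc ^ (s - c) \<le> ((2 * lc ^ (K - 1)) powr (1 / K)) ^ s"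
proof -
  have "c \<le> K * c"
    using assms(3) by simp
  then have "c \<le> s"
    using assms(4) by linarith
  have "real K * real c \<le> real s"
    using assms(4) by (metis of_nat_le_iff of_nat_mult)
  then have "real c \<le> real s / K"
    using assms(3) by (simp add: field_simps mult.commute)
  have two: "(2::real) ^ c \<le> 2 powr (real s / K)"
    using \<open>real c \<le> real s / K\<close> by (simp add: powr_realpow[symmetric])
  have lc: "lc ^ (s - c) \<le> lc powr (real (K - 1) * (real s / K))"
  proof -
    have "real (K - 1) * (real s / K) \<le> real (s - c)"
      using assms(3) \<open>c \<le> s\<close> \<open>real K * real c \<le> real s\<close> by (simp add: of_nat_diff field_simps)
    then show ?thesis
      using assms(1,2) powr_mono'[of "real (K - 1) * (real s / K)" "real (s - c)" lc]
      by (simp add: powr_realpow)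
  qed
  have "((2 * lc ^ (K - 1)) powr (1 / K)) ^ s = 2 powr (real s / K) * lc powr (real (K - 1) * (real s / K))"
    using assms(1) by (simp add: powr_power powr_mult powr_realpow[symmetric] powr_powr)
  then show ?thesis
    using two lc assms(1) by (simp only:) (rule mult_mono, simp_all)
qed

lemma powr_root_bounds:
  fixes x N :: real
  assumes "0 < x" "x < 1" "0 < N"
  shows "0 < x powr (1 / N)" "x powr (1 / N) < 1"
  using assms powr_less_mono2[of "1 / N" x 1] by simp_all

lemma ex_doubling_absorbed:
  fixes lc :: real
  assumes "0 < lc" "lc < 1"
  obtains K :: nat and \<mu> :: real where "0 < K" "0 < \<mu>" "\<mu> < 1"
    "\<And>c s. K * c \<le> s \<Longrightarrow> 2 ^ c * lc ^ (s - c) \<le> \<mu> ^ s"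
proof -
  obtain K0 where K0: "lc ^ K0 < 1 / 2"
    using real_arch_pow_inv[of "1 / 2" lc] assms by auto
  have "0 < 2 * lc ^ K0" "2 * lc ^ K0 < 1"
    using K0 assms(1) by simp_all
  then have "0 < (2 * lc ^ (Suc K0 - 1)) powr (1 / Suc K0)" "(2 * lc ^ (Suc K0 - 1)) powr (1 / Suc K0) < 1"
    using powr_root_bounds[of "2 * lc ^ K0" "Suc K0"] by simp_all
  then show ?thesis
    using assms two_power_mult_power_le[of lc "Suc K0"] by (intro that[of "Suc K0"]) simp_all
qed

lemma geometric_bound_combine:
  fixes \<beta> lc Ac :: real and W :: nat
  assumes "0 < \<beta>" "\<beta> < 1" "0 < lc" "lc < 1" "0 \<le> Ac" "0 < W"
  obtains A' l' where "0 \<le> A'" "0 < l'" "l' < 1"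
    "\<And>(P :: nat \<Rightarrow> real) m c s. c \<le> W * m \<Longrightarrow> (\<And>s. P s \<le> \<beta> ^ m) \<Longrightarrow>
       (\<And>t. P (c + t) \<le> \<beta> ^ m * (2 ^ c * (Ac * lc ^ t))) \<Longrightarrow> P s \<le> A' * l' ^ s"
proof -
  obtain K :: nat and \<mu> :: real where K: "0 < K" and \<mu>: "0 < \<mu>" "\<mu> < 1"
    and absorb: "\<And>c s. K * c \<le> s \<Longrightarrow> 2 ^ c * lc ^ (s - c) \<le> \<mu> ^ s"
    using ex_doubling_absorbed[OF assms(3,4)] by blast
  define \<nu> where "\<nu> = \<beta> powr (1 / real (K * W))"
  have \<nu>: "0 < \<nu>" "\<nu> < 1"
    unfolding \<nu>_def using assms(1,2,6) K powr_root_bounds[of \<beta> "real (K * W)"] by simp_all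
  show ?thesis
  proof (rule that[of "max 1 Ac" "max \<mu> \<nu>"])
    show "0 \<le> max 1 Ac" "0 < max \<mu> \<nu>" "max \<mu> \<nu> < 1"
      using \<mu> \<nu> by auto
    fix P :: "nat \<Rightarrow> real" and m c s
    assume c: "c \<le> W * m" and P1: "\<And>s. P s \<le> \<beta> ^ m"
      and P2: "\<And>t. P (c + t) \<le> \<beta> ^ m * (2 ^ c * (Ac * lc ^ t))"
    (* For s \<le> K W m the factor \<beta>^m alone is small enough; otherwise c \<le> s / K, and the
       factor 2^c is absorbed by lc^(s - c). *)
    show "P s \<le> max 1 Ac * max \<mu> \<nu> ^ s"
    proof (cases "s \<le> K * W * m")
      case True
      have "P s \<le> \<beta> ^ m"
        by (rule P1)
      also have "\<dots> \<le> \<nu> ^ s"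
        unfolding \<nu>_def using True assms(1,2,6) K by (intro power_le_powr_root) (simp_all add: mult.assoc)
      also have "\<dots> \<le> 1 * max \<mu> \<nu> ^ s"
        using \<nu> by (simp add: power_mono)
      also have "\<dots> \<le> max 1 Ac * max \<mu> \<nu> ^ s"
        using \<mu> by (intro mult_right_mono) auto
      finally show ?thesis .
    next
      case False
      have "K * c \<le> K * W * m"
        using mult_le_mono2[OF c, of K] by (simp only: mult.assoc)
      then have "K * c \<le> s"
        using False by linarith
      moreover have "c \<le> K * c"
        using K by simp
      ultimately have "c \<le> s"
        by linarith
      have "P s = P (c + (s - c))"
        using \<open>c \<le> s\<close> by simp
      also have "\<dots> \<le> \<beta> ^ m * (2 ^ c * (Ac * lc ^ (s - c)))"
        by (rule P2)
      also have "\<dots> \<le> Ac * (2 ^ c * lc ^ (s - c))"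
        using assms(1,2,3,5) mult_right_mono[of "\<beta> ^ m" 1 "2 ^ c * (Ac * lc ^ (s - c))"]
        by (simp add: power_le_one mult_ac)
      also have "\<dots> \<le> Ac * \<mu> ^ s"
        using assms(5) absorb[OF \<open>K * c \<le> s\<close>] by (rule mult_left_mono[rotated])
      also have "\<dots> \<le> max 1 Ac * max \<mu> \<nu> ^ s"
        using \<mu> by (intro mult_mono power_mono) auto
      finally show ?thesis .
    qed
  qed
qed

lemma dt_failure_prob_width_zero:
  assumes "wdnf 0 V T"
  shows "dt_failure_prob par \<theta> V T s = 0"
proof -
  have "C = {}" if "C \<in> T" for C
    using assms that unfolding wdnf_def by (auto simp: card_eq_0_iff)
  then have "dnf T y = (T \<noteq> {})" for y
    unfolding dnf_def by auto
  then show ?thesis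
    unfolding dt_failure_prob_def using has_dt_of_height_const[of "real s" "T \<noteq> {}"] by simp
qed

lemma dt_failure_prob_exponential_decay:
  fixes par :: "'v \<Rightarrow> 'u"
  assumes "0 \<le> \<theta>" "\<theta> < 1"
  shows "\<exists>Ac lc. 0 \<le> Ac \<and> 0 < lc \<and> lc < 1 \<and>
    (\<forall>V T s. finite V \<longrightarrow> wdnf w V T \<longrightarrow> dt_failure_prob par \<theta> V T s \<le> Ac * lc ^ s)"
proof (induction w)
  case 0
  show ?case
    by (intro exI[of _ "0 :: real"] exI[of _ "1 / 2 :: real"]) (simp add: dt_failure_prob_width_zero)
next
  case (Suc w)
  then obtain Ac lc where IH: "0 \<le> Ac" "0 < lc" "lc < 1"
    "\<And>V T s. finite V \<Longrightarrow> wdnf w V T \<Longrightarrow> dt_failure_prob par \<theta> V T s \<le> Ac * lc ^ s"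
    by blast
  define \<beta> where "\<beta> = 1 - ((1 - \<theta>) / 2) ^ Suc w"
  have "0 < ((1 - \<theta>) / 2) ^ Suc w" "((1 - \<theta>) / 2) ^ Suc w < 1"
    using assms by (simp, intro power_Suc_less_one) simp_all
  then have \<beta>: "0 < \<beta>" "\<beta> < 1"
    unfolding \<beta>_def by simp_all
  obtain A' l' where A'l': "0 \<le> A'" "0 < l'" "l' < 1"
    "\<And>(P :: nat \<Rightarrow> real) m c s. c \<le> Suc w * m \<Longrightarrow> (\<And>s. P s \<le> \<beta> ^ m) \<Longrightarrow>
       (\<And>t. P (c + t) \<le> \<beta> ^ m * (2 ^ c * (Ac * lc ^ t))) \<Longrightarrow> P s \<le> A' * l' ^ s"
    using geometric_bound_combine[OF \<beta> IH(2,3,1) zero_less_Suc] by blast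
  show ?case
  proof (intro exI conjI allI impI)
    fix V :: "'v set" and T s
    assume "finite V" "wdnf (Suc w) V T"
    show "dt_failure_prob par \<theta> V T s \<le> A' * l' ^ s"
    proof (rule dt_failure_prob_round[OF assms(1) less_imp_le[OF assms(2)] \<open>finite V\<close> \<open>wdnf (Suc w) V T\<close>
          IH(4) IH(1) less_imp_le[OF IH(2)], folded \<beta>_def])
      fix c m
      assume "c \<le> Suc w * m" "\<And>s. dt_failure_prob par \<theta> V T s \<le> \<beta> ^ m"
        "\<And>t. dt_failure_prob par \<theta> V T (c + t) \<le> \<beta> ^ m * (2 ^ c * (Ac * lc ^ t))"
      then show ?thesis
        by (rule A'l'(4))
    qed
  qed (use A'l' in auto)
qed

lemma power_nat_floor_le_powr:
  fixes lc H :: real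
  assumes "0 < lc" "lc \<le> 1" "0 \<le> H"
  shows "lc ^ nat \<lfloor>H\<rfloor> \<le> lc powr H / lc"
proof -
  have "lc ^ nat \<lfloor>H\<rfloor> = lc powr real (nat \<lfloor>H\<rfloor>)"
    using assms(1) by (simp add: powr_realpow)
  also have "\<dots> \<le> lc powr (H - 1)"
    using assms by (intro powr_mono') linarith+
  also have "\<dots> = lc powr H / lc"
    using assms(1) by (simp add: powr_diff)
  finally show ?thesis .
qed

lemma prob_not_has_dt_of_height_le_inverse:
  fixes M :: "'a pmf" and g :: "'a \<Rightarrow> ('b \<Rightarrow> bool) \<Rightarrow> bool"
  assumes "\<And>s::nat. measure_pmf.prob M {r. \<not> has_dt_of_height (g r) (real s)} \<le> Ac * lc ^ s"
    and "0 \<le> Ac" "0 < lc" "lc < 1" "0 < p"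
  shows "measure_pmf.prob M {r. \<not> has_dt_of_height (g r) (- 1 / ln lc * ln p)} \<le> max 1 (Ac / lc) / p"
proof (cases "p < 1")
  case True
  then have "1 \<le> max 1 (Ac / lc) / p"
    using assms(5) by (simp add: field_simps)
  then show ?thesis
    using measure_pmf.prob_le_1 order.trans by blast
next
  case False
  define H where "H = - 1 / ln lc * ln p"
  have "ln lc < 0" "0 \<le> ln p"
    using assms(3,4) False by simp_all
  then have H: "0 \<le> H" "lc powr H = 1 / p"
    using assms(3,5) unfolding H_def by (simp_all add: divide_nonneg_neg powr_def exp_minus exp_ln field_simps)
  have "measure_pmf.prob M {r. \<not> has_dt_of_height (g r) H}
      \<le> measure_pmf.prob M {r. \<not> has_dt_of_height (g r) (real (nat \<lfloor>H\<rfloor>))}"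
    using has_dt_of_height_mono[of _ "real (nat \<lfloor>H\<rfloor>)" H] H(1)
    by (intro measure_pmf.finite_measure_mono) auto
  also have "\<dots> \<le> Ac * lc ^ nat \<lfloor>H\<rfloor>"
    by (rule assms(1))
  also have "\<dots> \<le> Ac * (lc powr H / lc)"
    using assms(2-4) H(1) by (intro mult_left_mono power_nat_floor_le_powr) simp_all
  also have "\<dots> = Ac / lc / p"
    using H(2) by simp
  also have "\<dots> \<le> max 1 (Ac / lc) / p"
    using assms(5) by (intro divide_right_mono) auto
  finally show ?thesis
    unfolding H_def .
qed

theorem mainTheorem17:
  fixes k w :: nat and \<theta> :: real
  assumes "k \<ge> 2" and "0 \<le> \<theta>" and "\<theta> < 1" and "w > 0"
  shows "\<exists>h > 0. \<exists>C :: real.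
    \<forall>d d' :: nat. \<forall>p :: real. \<forall>f :: (nat list \<Rightarrow> bool) \<Rightarrow> bool.
      1 \<le> d' \<longrightarrow> d' \<le> d \<longrightarrow> p > 0 \<longrightarrow> is_wDNF w (tree_level k d') f \<longrightarrow>
      measure_pmf.prob (restr_pmf k \<theta> d')
        {r. \<not> has_dt_of_height (\<lambda>x. f (Phi r x)) (h * ln p)} \<le> C / p"
proof -
  (* The decay bound holds on every finite variable set. *)
  obtain Ac lc where c: "0 \<le> Ac" "0 < lc" "lc < 1"
    and decay: "\<And>V T s. finite V \<Longrightarrow> wdnf w V T \<Longrightarrow> dt_failure_prob parent \<theta> V T s \<le> Ac * lc ^ s"
    using dt_failure_prob_exponential_decay[OF assms(2,3), where par = parent and w = w] by blast
  show ?thesis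
  proof (rule exI[of _ "- 1 / ln lc"], intro conjI exI[of _ "max 1 (Ac / lc)"] allI impI)
    show "0 < - 1 / ln lc"
      using c(2,3) by (simp add: divide_neg_neg)
    fix d d' :: nat and p :: real and f :: "(nat list \<Rightarrow> bool) \<Rightarrow> bool"
    assume "1 \<le> d'" "d' \<le> d" "0 < p" "is_wDNF w (tree_level k d') f"
    then obtain T where T: "wdnf w (tree_level k d') T" "f = dnf T"
      by (auto simp: is_wDNF_iff)
    show "measure_pmf.prob (restr_pmf k \<theta> d') {r. \<not> has_dt_of_height (\<lambda>x. f (Phi r x)) (- 1 / ln lc * ln p)}
        \<le> max 1 (Ac / lc) / p"
      unfolding restr_pmf_def T(2) Phi_eq_Phi_par
      using decay[OF finite_tree_level T(1)] c \<open>0 < p\<close>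
      by (intro prob_not_has_dt_of_height_le_inverse) (simp_all add: dt_failure_prob_def)
  qed
qed

end
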